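(* Let $P,Q\in\mathbb P_d$ and $R=(1-t)P^{-1}+tQ^{-1}$ for some $t\in[0,1]$. Then $\operatorname{F}_R(P,Q)=\operatorname{F}^{\mathrm M}(P,Q)$.
   Context: $\mathbb P_d$ is the set of $d\times d$ complex positive definite matrices; $A\#B:=A^{1/2}(A^{-1/2}BA^{-1/2})^{1/2}A^{1/2}$. The generalized fidelity is $\operatorname{F}_R(P,Q):=\operatorname{Tr}\big[\sqrt{R^{1/2}PR^{1/2}}\,R^{-1}\sqrt{R^{1/2}QR^{1/2}}\big]$, and the Matsumoto fidelity is $\operatorname{F}^{\mathrm M}(P,Q):=\operatorname{Tr}[P\#Q]$. *)

theory Defs
  imports "Jordan_Normal_Form.Schur_Decomposition"
begin

definition mtrace :: "complex mat \<Rightarrow> complex" where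
  "mtrace A = (\<Sum>i<dim_row A. A $$ (i, i))"

definition hermitian_mat :: "complex mat \<Rightarrow> bool" where
  "hermitian_mat A \<longleftrightarrow> mat_adjoint A = A"

definition psd_mat :: "nat \<Rightarrow> complex mat \<Rightarrow> bool" where
  "psd_mat d A \<longleftrightarrow> A \<in> carrier_mat d d \<and> hermitian_mat A \<and>
     (\<forall>v \<in> carrier_vec d. Re (conjugate v \<bullet> (A *\<^sub>v v)) \<ge> 0)"

definition pd_mat :: "nat \<Rightarrow> complex mat \<Rightarrow> bool" where
  "pd_mat d A \<longleftrightarrow> A \<in> carrier_mat d d \<and> hermitian_mat A \<and>
     (\<forall>v \<in> carrier_vec d. v \<noteq> 0\<^sub>v d \<longrightarrow> Re (conjugate v \<bullet> (A *\<^sub>v v)) > 0)"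

definition mat_inv :: "nat \<Rightarrow> complex mat \<Rightarrow> complex mat" where
  "mat_inv d A = (THE B. B \<in> carrier_mat d d \<and> A * B = 1\<^sub>m d \<and> B * A = 1\<^sub>m d)"

definition mat_sqrt :: "nat \<Rightarrow> complex mat \<Rightarrow> complex mat" where
  "mat_sqrt d A = (THE B. psd_mat d B \<and> B * B = A)"

definition mat_geo_mean :: "nat \<Rightarrow> complex mat \<Rightarrow> complex mat \<Rightarrow> complex mat" where
  "mat_geo_mean d A B =
     (let Ah = mat_sqrt d A; Aih = mat_inv d Ah
      in Ah * mat_sqrt d (Aih * B * Aih) * Ah)"

definition gen_fidelity :: "nat \<Rightarrow> complex mat \<Rightarrow> complex mat \<Rightarrow> complex mat \<Rightarrow> complex" where
  "gen_fidelity d R P Q =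
     (let Rh = mat_sqrt d R
      in mtrace (mat_sqrt d (Rh * P * Rh) * mat_inv d R * mat_sqrt d (Rh * Q * Rh)))"

definition matsumoto_fidelity :: "nat \<Rightarrow> complex mat \<Rightarrow> complex mat \<Rightarrow> complex" where
  "matsumoto_fidelity d P Q = mtrace (mat_geo_mean d P Q)"

end

theory Submission imports Defs begin

text \<open>
  Put \<open>A = P^(1/2)\<close> and \<open>X = (A^-1 Q A^-1)^(1/2)\<close>, so that \<open>P = A A\<close>, \<open>Q = A X X A\<close> and
  \<open>P # Q = A X A\<close>. For \<open>R = (1 - t) P^-1 + t Q^-1\<close> the congruence \<open>A R A = (1 - t) I + t X^-2\<close>
  is a function \<open>K\<close> of \<open>X\<close>, hence so is \<open>L = K^(-1/2)\<close>. With \<open>C = R^(1/2) A\<close>, so that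
  \<open>C\<^sup>* C = K\<close>, squaring shows \<open>(R^(1/2) P R^(1/2))^(1/2) = C L C\<^sup>*\<close> and
  \<open>(R^(1/2) Q R^(1/2))^(1/2) = C L X C\<^sup>*\<close>; since \<open>C\<^sup>* R^-1 C = P\<close>, cyclicity of the trace reduces
  \<open>F_R(P,Q)\<close> to \<open>Tr(P X L K L) = Tr(A X A)\<close>. Existence and uniqueness of positive square roots,
  needed for \<open>mat_sqrt\<close> to mean anything, come from the spectral theorem, obtained from a unitary
  Schur decomposition.
\<close>


section \<open>Adjoints and sesquilinear forms\<close>

abbreviation adj :: "complex mat \<Rightarrow> complex mat" where "adj \<equiv> mat_adjoint"

lemma mult_carrier_mat_square[simp]:
  "A \<in> carrier_mat n n \<Longrightarrow> B \<in> carrier_mat n n \<Longrightarrow> A * B \<in> carrier_mat n n"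
  by simp

lemma mat_adjoint_dim[simp]: "dim_row (adj A) = dim_col A" "dim_col (adj A) = dim_row A"
  unfolding mat_adjoint_def by (auto simp: mat_of_rows_def)

lemma mat_adjoint_index[simp]:
  "i < dim_col A \<Longrightarrow> j < dim_row A \<Longrightarrow> adj A $$ (i,j) = cnj (A $$ (j,i))"
  unfolding mat_adjoint_def by (auto simp: mat_of_rows_def)

lemma mat_adjoint_carrier[simp]: "A \<in> carrier_mat m n \<Longrightarrow> adj A \<in> carrier_mat n m"
  by (metis mat_adjoint_dim carrier_matD carrier_matI)

lemma mat_adjoint_adjoint[simp]: "adj (adj A) = A"
  by (rule eq_matI, auto)

lemma mat_adjoint_one[simp]: "adj (1\<^sub>m n) = 1\<^sub>m n"
  by (intro eq_matI, auto)

lemma mat_adjoint_mult: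
  assumes "A \<in> carrier_mat m k" "B \<in> carrier_mat k n"
  shows "adj (A * B) = adj B * adj A"
proof (rule eq_matI)
  fix i j assume i: "i < dim_row (adj B * adj A)" and j: "j < dim_col (adj B * adj A)"
  have "adj (A * B) $$ (i,j) = cnj (\<Sum>l = 0..<k. A $$ (j,l) * B $$ (l,i))"
    using assms i j by (simp add: scalar_prod_def)
  also have "\<dots> = (\<Sum>l = 0..<k. cnj (B $$ (l,i)) * cnj (A $$ (j,l)))"
    by (simp add: mult.commute)
  also have "\<dots> = (adj B * adj A) $$ (i,j)"
    using assms i j by (simp add: scalar_prod_def)
  finally show "adj (A * B) $$ (i,j) = (adj B * adj A) $$ (i,j)" .
qed (use assms in auto)

lemma mat_adjoint_add:
  "A \<in> carrier_mat m n \<Longrightarrow> B \<in> carrier_mat m n \<Longrightarrow> adj (A + B) = adj A + adj B"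
  by (intro eq_matI, auto)

lemma mat_adjoint_smult: "adj (c \<cdot>\<^sub>m A) = cnj c \<cdot>\<^sub>m adj A"
  by (intro eq_matI, auto)

lemma mat_adjoint_four_block:
  assumes "A \<in> carrier_mat n1 m1" "B \<in> carrier_mat n1 m2" "C \<in> carrier_mat n2 m1"
    "D \<in> carrier_mat n2 m2"
  shows "adj (four_block_mat A B C D) = four_block_mat (adj A) (adj C) (adj B) (adj D)"
  using assms by (intro eq_matI, auto)

lemma index_mat_adjoint_mult:
  "i < dim_col W \<Longrightarrow> j < dim_col W \<Longrightarrow> (adj W * W) $$ (i,j) = conjugate (col W i) \<bullet> col W j"
  by (subgoal_tac "row (adj W) i = conjugate (col W i)", simp, intro eq_vecI, auto)

lemma conjugate_mat_adjoint_mult_vec: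
  assumes C: "C \<in> carrier_mat n k" and v: "v \<in> carrier_vec n"
  shows "conjugate (adj C *\<^sub>v v) = transpose_mat C *\<^sub>v conjugate v"
proof (rule eq_vecI)
  fix i assume "i < dim_vec (transpose_mat C *\<^sub>v conjugate v)"
  hence i: "i < k" using C by simp
  have "conjugate (adj C *\<^sub>v v) $ i = cnj (\<Sum>l = 0..<n. cnj (C $$ (l,i)) * v $ l)"
    using assms i by (simp add: scalar_prod_def)
  also have "\<dots> = (\<Sum>l = 0..<n. C $$ (l,i) * cnj (v $ l))"
    by simp
  also have "\<dots> = (transpose_mat C *\<^sub>v conjugate v) $ i"
    using assms i by (simp add: scalar_prod_def)
  finally show "conjugate (adj C *\<^sub>v v) $ i = (transpose_mat C *\<^sub>v conjugate v) $ i" .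
qed (use assms in auto)

lemma cscalar_prod_mult_mat_vec:
  assumes C: "C \<in> carrier_mat n k" and v: "v \<in> carrier_vec n" and x: "x \<in> carrier_vec k"
  shows "conjugate v \<bullet> (C *\<^sub>v x) = conjugate (adj C *\<^sub>v v) \<bullet> x"
  unfolding conjugate_mat_adjoint_mult_vec[OF C v]
  by (rule transpose_vec_mult_scalar[OF C x, symmetric], use v in auto)

lemma congruence_mult_vec:
  assumes C: "C \<in> carrier_mat n k" and M: "M \<in> carrier_mat k k" and v: "v \<in> carrier_vec n"
  shows "(C * M * adj C) *\<^sub>v v = C *\<^sub>v (M *\<^sub>v (adj C *\<^sub>v v))"
proof -
  have w: "adj C *\<^sub>v v \<in> carrier_vec k" using mult_mat_vec_carrier[OF mat_adjoint_carrier[OF C] v] .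
  have "(C * M * adj C) *\<^sub>v v = (C * M) *\<^sub>v (adj C *\<^sub>v v)"
    using C M v by (intro assoc_mult_mat_vec[of _ n k], auto)
  also have "\<dots> = C *\<^sub>v (M *\<^sub>v (adj C *\<^sub>v v))"
    using C M w by (intro assoc_mult_mat_vec[of _ n k], auto)
  finally show ?thesis .
qed

lemma cscalar_prod_congruence:
  assumes C: "C \<in> carrier_mat n k" and M: "M \<in> carrier_mat k k" and v: "v \<in> carrier_vec n"
  shows "conjugate v \<bullet> ((C * M * adj C) *\<^sub>v v) = conjugate (adj C *\<^sub>v v) \<bullet> (M *\<^sub>v (adj C *\<^sub>v v))"
  unfolding congruence_mult_vec[OF assms]
  by (rule cscalar_prod_mult_mat_vec[OF C v],
      use M mult_mat_vec_carrier[OF mat_adjoint_carrier[OF C] v] in simp)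

lemma cscalar_prod_smult:
  "x \<in> carrier_vec n \<Longrightarrow> y \<in> carrier_vec n \<Longrightarrow>
   conjugate (a \<cdot>\<^sub>v x) \<bullet> (b \<cdot>\<^sub>v y) = cnj a * b * (conjugate x \<bullet> y)"
  by (simp add: scalar_prod_def sum_distrib_left ac_simps)

lemma left_inverse_mult_vec_eq_0:
  fixes E F :: "'a :: semiring_1 mat"
  assumes "E \<in> carrier_mat n n" "E * F = 1\<^sub>m n" "F \<in> carrier_mat n n" "v \<in> carrier_vec n"
    "F *\<^sub>v v = 0\<^sub>v n"
  shows "v = 0\<^sub>v n"
proof -
  have "(E * F) *\<^sub>v v = v" using assms(2,4) by simp
  then have "v = (E * F) *\<^sub>v v" ..
  also have "\<dots> = E *\<^sub>v (F *\<^sub>v v)" using assms by (intro assoc_mult_mat_vec, auto)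
  finally show ?thesis using assms by (auto intro!: eq_vecI)
qed

lemma smult_mult_mat_vec:
  "A \<in> carrier_mat n m \<Longrightarrow> v \<in> carrier_vec m \<Longrightarrow> (k \<cdot>\<^sub>m A) *\<^sub>v v = k \<cdot>\<^sub>v (A *\<^sub>v v)"
  by (intro eq_vecI, auto simp: scalar_prod_def sum_distrib_left ac_simps)

lemma mat_eq_by_mult_vec:
  fixes A B :: "complex mat"
  assumes A: "A \<in> carrier_mat n n" and B: "B \<in> carrier_mat n n"
    and eq: "\<And>v. v \<in> carrier_vec n \<Longrightarrow> A *\<^sub>v v = B *\<^sub>v v"
  shows "A = B"
proof (rule eq_matI)
  fix i j assume "i < dim_row B" "j < dim_col B"
  hence i: "i < n" and j: "j < n" using B by auto
  have "A $$ (i,j) = (A *\<^sub>v unit_vec n j) $ i" using A i j by simp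
  also have "\<dots> = (B *\<^sub>v unit_vec n j) $ i" using eq[of "unit_vec n j"] by simp
  also have "\<dots> = B $$ (i,j)" using B i j by simp
  finally show "A $$ (i,j) = B $$ (i,j)" .
qed (use A B in auto)


section \<open>Positive (semi)definite matrices\<close>

lemma psd_mat_carrier: "psd_mat n A \<Longrightarrow> A \<in> carrier_mat n n"
  unfolding psd_mat_def by auto

lemma pd_mat_carrier: "pd_mat n A \<Longrightarrow> A \<in> carrier_mat n n"
  unfolding pd_mat_def by auto

lemma psd_mat_adjoint: "psd_mat n A \<Longrightarrow> adj A = A"
  unfolding psd_mat_def hermitian_mat_def by auto

lemma pd_mat_adjoint: "pd_mat n A \<Longrightarrow> adj A = A"
  unfolding pd_mat_def hermitian_mat_def by auto

lemma pd_imp_psd_mat: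
  assumes A: "pd_mat n A"
  shows "psd_mat n A"
proof -
  have "0 \<le> Re (conjugate v \<bullet> (A *\<^sub>v v))" if v: "v \<in> carrier_vec n" for v
  proof (cases "v = 0\<^sub>v n")
    case True
    then show ?thesis using pd_mat_carrier[OF A] by (simp add: scalar_prod_def)
  next
    case False
    then show ?thesis using A v unfolding pd_mat_def by (auto intro: less_imp_le)
  qed
  then show ?thesis using A unfolding pd_mat_def psd_mat_def by auto
qed

lemma hermitian_congruence:
  assumes "M \<in> carrier_mat k k" "adj M = M" "C \<in> carrier_mat n k"
  shows "hermitian_mat (C * M * adj C)"
proof -
  have "adj (C * M * adj C) = adj (adj C) * adj (C * M)"
    using assms by (intro mat_adjoint_mult[of _ n k], auto)
  also have "\<dots> = C * M * adj C"
    using assms by (simp add: mat_adjoint_mult[of C n k M k] assoc_mult_mat[of C n k M k "adj C" n])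
  finally show ?thesis unfolding hermitian_mat_def .
qed

lemma psd_congruence:
  assumes M: "psd_mat k M" and C: "C \<in> carrier_mat n k"
  shows "psd_mat n (C * M * adj C)"
proof -
  have Mc: "M \<in> carrier_mat k k" using psd_mat_carrier[OF M] .
  have "0 \<le> Re (conjugate v \<bullet> ((C * M * adj C) *\<^sub>v v))" if v: "v \<in> carrier_vec n" for v
    unfolding cscalar_prod_congruence[OF C Mc v]
    using M mult_mat_vec_carrier[OF mat_adjoint_carrier[OF C] v] unfolding psd_mat_def by blast
  then show ?thesis unfolding psd_mat_def
    using hermitian_congruence[OF Mc psd_mat_adjoint[OF M] C] Mc C by auto
qed

lemma pd_congruence:
  assumes M: "pd_mat n M" and C: "C \<in> carrier_mat n n" and E: "E \<in> carrier_mat n n"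
    and EC: "E * adj C = 1\<^sub>m n"
  shows "pd_mat n (C * M * adj C)"
proof -
  have Mc: "M \<in> carrier_mat n n" using pd_mat_carrier[OF M] .
  have "0 < Re (conjugate v \<bullet> ((C * M * adj C) *\<^sub>v v))"
    if v: "v \<in> carrier_vec n" and v0: "v \<noteq> 0\<^sub>v n" for v
  proof -
    have "adj C *\<^sub>v v \<noteq> 0\<^sub>v n"
      using left_inverse_mult_vec_eq_0[OF E EC _ v] C v0 by auto
    then show ?thesis unfolding cscalar_prod_congruence[OF C Mc v]
      using M mult_mat_vec_carrier[OF mat_adjoint_carrier[OF C] v] unfolding pd_mat_def by blast
  qed
  then show ?thesis unfolding pd_mat_def
    using hermitian_congruence[OF Mc pd_mat_adjoint[OF M] C] Mc C by auto
qed

lemma pd_convex_comb: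
  assumes A: "pd_mat n A" and B: "pd_mat n B" and t: "0 \<le> t" "t \<le> 1"
  shows "pd_mat n (complex_of_real (1 - t) \<cdot>\<^sub>m A + complex_of_real t \<cdot>\<^sub>m B)"
proof -
  have Ac: "A \<in> carrier_mat n n" and Bc: "B \<in> carrier_mat n n" using A B pd_mat_carrier by auto
  let ?a = "complex_of_real (1 - t)" and ?b = "complex_of_real t"
  let ?C = "?a \<cdot>\<^sub>m A + ?b \<cdot>\<^sub>m B"
  have herm: "hermitian_mat ?C"
    using pd_mat_adjoint[OF A] pd_mat_adjoint[OF B] Ac Bc
    unfolding hermitian_mat_def by (simp add: mat_adjoint_add[of _ n n] mat_adjoint_smult)
  have "0 < Re (conjugate v \<bullet> (?C *\<^sub>v v))" if v: "v \<in> carrier_vec n" and v0: "v \<noteq> 0\<^sub>v n" for v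
  proof -
    have "?C *\<^sub>v v = ?a \<cdot>\<^sub>v (A *\<^sub>v v) + ?b \<cdot>\<^sub>v (B *\<^sub>v v)"
      using Ac Bc v by (simp add: add_mult_distrib_mat_vec[of _ n n] smult_mult_mat_vec)
    then have "Re (conjugate v \<bullet> (?C *\<^sub>v v))
       = (1 - t) * Re (conjugate v \<bullet> (A *\<^sub>v v)) + t * Re (conjugate v \<bullet> (B *\<^sub>v v))"
      using Ac Bc v by (simp add: scalar_prod_add_distrib[of _ n])
    moreover have "Re (conjugate v \<bullet> (A *\<^sub>v v)) > 0" "Re (conjugate v \<bullet> (B *\<^sub>v v)) > 0"
      using A B v v0 unfolding pd_mat_def by auto
    ultimately show ?thesis using t
      by (smt (verit) mult_pos_pos mult_nonneg_nonneg)
  qed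
  then show ?thesis unfolding pd_mat_def using herm Ac Bc by auto
qed


section \<open>Unitary matrices and the Schur decomposition\<close>

definition unitary_mat :: "nat \<Rightarrow> complex mat \<Rightarrow> bool" where
  "unitary_mat n U \<longleftrightarrow> U \<in> carrier_mat n n \<and> adj U * U = 1\<^sub>m n \<and> U * adj U = 1\<^sub>m n"

lemma unitary_matI:
  assumes U: "U \<in> carrier_mat n n" and UU: "adj U * U = 1\<^sub>m n"
  shows "unitary_mat n U"
  using mat_mult_left_right_inverse[OF mat_adjoint_carrier[OF U] U UU] U UU
  unfolding unitary_mat_def by auto

lemma unitary_matD:
  assumes "unitary_mat n U"
  shows "U \<in> carrier_mat n n" "adj U \<in> carrier_mat n n" "adj U * U = 1\<^sub>m n" "U * adj U = 1\<^sub>m n"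
  using assms unfolding unitary_mat_def by auto

lemma unitary_mat_cancel:
  assumes U: "unitary_mat n U" and X: "X \<in> carrier_mat n k"
  shows "adj U * (U * X) = X" "U * (adj U * X) = X"
  using unitary_matD[OF U] X
  by (simp_all flip: assoc_mult_mat[of _ n n _ n X k])

lemma unitary_mat_mult:
  assumes U: "unitary_mat n U" and V: "unitary_mat n V"
  shows "unitary_mat n (U * V)"
proof (rule unitary_matI)
  note u = unitary_matD[OF U] and v = unitary_matD[OF V]
  show "U * V \<in> carrier_mat n n" using u v by simp
  have "adj (U * V) * (U * V) = adj V * (adj U * (U * V))"
    using u v by (simp add: mat_adjoint_mult[of _ n n] assoc_mult_mat[of "adj V" n n "adj U" n "U * V" n])
  also have "\<dots> = 1\<^sub>m n" using u v unitary_mat_cancel(1)[OF U v(1)] by simp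
  finally show "adj (U * V) * (U * V) = 1\<^sub>m n" .
qed

lemma unitary_mat_block:
  assumes U: "unitary_mat m U"
  shows "unitary_mat (Suc m) (four_block_mat (1\<^sub>m 1) (0\<^sub>m 1 m) (0\<^sub>m m 1) U)"
    (is "unitary_mat _ ?B")
proof (rule unitary_matI)
  note u = unitary_matD[OF U]
  show B: "?B \<in> carrier_mat (Suc m) (Suc m)"
    using u(1) by (metis four_block_carrier_mat one_carrier_mat plus_1_eq_Suc)
  have "adj ?B = four_block_mat (1\<^sub>m 1) (0\<^sub>m 1 m) (0\<^sub>m m 1) (adj U)"
    using u by (subst mat_adjoint_four_block[of _ 1 1 _ m _ m], auto)
  then have "adj ?B * ?B = four_block_mat (1\<^sub>m 1) (0\<^sub>m 1 m) (0\<^sub>m m 1) (1\<^sub>m m)"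
    using u by (simp add: mult_four_block_mat[of _ 1 1 _ m _ m _ _ 1 _ m])
  then show "adj ?B * ?B = 1\<^sub>m (Suc m)" by simp
qed

lemma unitary_mat_of_corthogonal:
  assumes ws: "set ws \<subseteq> carrier_vec n" "corthogonal ws" "length ws = n"
  obtains c where "unitary_mat n (mat_of_cols n (map (\<lambda>i. c i \<cdot>\<^sub>v ws ! i) [0..<n]))"
proof
  have wsi: "ws ! i \<in> carrier_vec n" if "i < n" for i using ws that by auto
  have ws_orth: "conjugate (ws ! i) \<bullet> ws ! j = 0" if "i < n" "j < n" "i \<noteq> j" for i j
    using corthogonalD[OF ws(2), of j i] conjugate_vec_sprod_comm[OF wsi wsi, of j i] that ws(3)
    by auto
  define r where "r i = Re (conjugate (ws ! i) \<bullet> (ws ! i))" for i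
  have r: "conjugate (ws ! i) \<bullet> (ws ! i) = of_real (r i) \<and> r i > 0" if i: "i < n" for i
  proof -
    have "ws ! i \<bullet>c ws ! i \<noteq> 0" using corthogonalD[OF ws(2), of i i] i ws(3) by auto
    then have "ws ! i \<bullet>c ws ! i > 0" using conjugate_square_ge_0_vec[of "ws ! i"] by auto
    then show ?thesis
      unfolding r_def conjugate_vec_sprod_comm[OF wsi[OF i] wsi[OF i], symmetric]
      by (auto simp: less_complex_def complex_eq_iff)
  qed
  define c where "c i = complex_of_real (1 / sqrt (r i))" for i
  define W where "W = mat_of_cols n (map (\<lambda>i. c i \<cdot>\<^sub>v ws ! i) [0..<n])"
  have W: "W \<in> carrier_mat n n" unfolding W_def by auto
  have colW: "col W i = c i \<cdot>\<^sub>v ws ! i" if "i < n" for i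
    unfolding W_def using that wsi by (subst col_mat_of_cols, auto)
  have "adj W * W = 1\<^sub>m n"
  proof (rule eq_matI)
    fix i j assume "i < dim_row (1\<^sub>m n)" and "j < dim_col (1\<^sub>m n)"
    hence i: "i < n" and j: "j < n" by auto
    have "(adj W * W) $$ (i,j) = cnj (c i) * c j * (conjugate (ws ! i) \<bullet> ws ! j)"
      using index_mat_adjoint_mult[of i W j] W i j
      by (simp add: colW cscalar_prod_smult[OF wsi[OF i] wsi[OF j]])
    also have "\<dots> = 1\<^sub>m n $$ (i,j)"
    proof (cases "i = j")
      case True
      have "sqrt (r j) > 0" using r[OF j] by auto
      then show ?thesis using True r[OF j] i unfolding c_def by (simp add: complex_eq_iff)
    qed (use ws_orth i j in simp)
    finally show "(adj W * W) $$ (i,j) = 1\<^sub>m n $$ (i,j)" .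
  qed (use W in auto)
  then show "unitary_mat n (mat_of_cols n (map (\<lambda>i. c i \<cdot>\<^sub>v ws ! i) [0..<n]))"
    using unitary_matI[OF W] unfolding W_def by blast
qed

lemma unitary_mat_first_col:
  fixes v :: "complex vec"
  assumes v: "v \<in> carrier_vec n" and v0: "v \<noteq> 0\<^sub>v n"
  shows "\<exists>W c. unitary_mat n W \<and> col W 0 = c \<cdot>\<^sub>v v"
proof -
  interpret cof_vec_space n "TYPE(complex)" .
  define b where "b = basis_completion v"
  define ws where "ws = gram_schmidt n b"
  from basis_completion[OF v v0, folded b_def]
  have dist_b: "distinct b" and indep: "\<not> lin_dep (set b)" and b: "set b \<subseteq> carrier_vec n"
    and hdb: "hd b = v" and len_b: "length b = n" by auto
  have n: "n \<noteq> 0" using v v0 by (cases n, auto)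
  from hdb len_b n obtain vs where bv: "b = v # vs" by (cases b, auto)
  from gram_schmidt_result[OF b dist_b indep refl, folded ws_def]
  have ws: "set ws \<subseteq> carrier_vec n" "corthogonal ws" "length ws = n"
    by (auto simp: len_b)
  from gram_schmidt_hd[OF v, of vs, folded bv] have "hd ws = v" unfolding ws_def .
  then have ws0: "ws ! 0 = v" using n ws(3) by (cases ws, auto)
  obtain c where "unitary_mat n (mat_of_cols n (map (\<lambda>i. c i \<cdot>\<^sub>v ws ! i) [0..<n]))"
    using unitary_mat_of_corthogonal[OF ws] by blast
  moreover have "col (mat_of_cols n (map (\<lambda>i. c i \<cdot>\<^sub>v ws ! i) [0..<n])) 0 = c 0 \<cdot>\<^sub>v v"
    using n ws ws0 by (subst col_mat_of_cols, auto)
  ultimately show ?thesis by blast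
qed

lemma unitary_mat_deflation:
  assumes A: "A \<in> carrier_mat n n" and ev: "eigenvector A v e"
  shows "\<exists>W. unitary_mat n W \<and> (\<forall>i<n. (adj W * A * W) $$ (i,0) = (if i = 0 then e else 0))"
proof -
  have v: "v \<in> carrier_vec n" and v0: "v \<noteq> 0\<^sub>v n" and Av: "A *\<^sub>v v = e \<cdot>\<^sub>v v"
    using ev A unfolding eigenvector_def by auto
  obtain W c where W: "unitary_mat n W" and W0: "col W 0 = c \<cdot>\<^sub>v v"
    using unitary_mat_first_col[OF v v0] by auto
  note w = unitary_matD[OF W]
  have "(adj W * A * W) $$ (i,0) = (if i = 0 then e else 0)" if i: "i < n" for i
  proof -
    have n: "0 < n" using i by simp
    have cW0: "col W 0 \<in> carrier_vec n" using w by (intro carrier_vecI, auto)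
    have AW0: "A *\<^sub>v col W 0 = e \<cdot>\<^sub>v col W 0"
      unfolding W0 using mult_mat_vec[OF A v, of c] Av by (auto simp: ac_simps)
    have "(adj W * A * W) $$ (i,0) = row (adj W) i \<bullet> col (A * W) 0"
      using w A i n by (simp add: assoc_mult_mat[of _ n n _ n _ n])
    also have "col (A * W) 0 = A *\<^sub>v col W 0" using w A n by (intro eq_vecI, auto)
    also have "row (adj W) i = conjugate (col W i)" using w i by (intro eq_vecI, auto)
    also have "conjugate (col W i) \<bullet> (A *\<^sub>v col W 0) = e * (conjugate (col W i) \<bullet> col W 0)"
      unfolding AW0 using w i cW0 by (intro scalar_prod_smult_distrib[of _ n], auto)
    also have "conjugate (col W i) \<bullet> col W 0 = (adj W * W) $$ (i, 0)"
      using index_mat_adjoint_mult[of i W 0] w i n by auto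
    finally show ?thesis unfolding w(3) using i n by simp
  qed
  then show ?thesis using W by blast
qed

lemma unitary_triangular_block:
  assumes sp: "split_block A 1 1 = (A1,A2,A0,A3)" and A: "A \<in> carrier_mat (Suc m) (Suc m)"
    and A0: "A0 = 0\<^sub>m m 1"
    and U3: "unitary_mat m U3" and T3: "T3 \<in> carrier_mat m m" "upper_triangular T3"
    and A3: "A3 = U3 * T3 * adj U3"
  shows "\<exists>B T. unitary_mat (Suc m) B \<and> T \<in> carrier_mat (Suc m) (Suc m) \<and> upper_triangular T
     \<and> A = B * T * adj B"
proof -
  have "dim_row A = 1 + m" "dim_col A = 1 + m" using A by auto
  note spl = split_block[OF sp this]
  note u3 = unitary_matD[OF U3]
  define B where "B = four_block_mat (1\<^sub>m 1) (0\<^sub>m 1 m) (0\<^sub>m m 1) U3"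
  define T where "T = four_block_mat A1 (A2 * U3) (0\<^sub>m m 1) T3"
  have adjB: "adj B = four_block_mat (1\<^sub>m 1) (0\<^sub>m 1 m) (0\<^sub>m m 1) (adj U3)"
    unfolding B_def using u3 by (subst mat_adjoint_four_block[of _ 1 1 _ m _ m], auto)
  have T: "T \<in> carrier_mat (Suc m) (Suc m)"
    unfolding T_def using spl T3 by (metis four_block_carrier_mat plus_1_eq_Suc)
  have "upper_triangular A1" using spl(1) by (auto simp: upper_triangular_def)
  then have "upper_triangular T"
    unfolding T_def by (rule upper_triangular_four_block[OF spl(1) T3(1) _ T3(2)])
  moreover have "B * T * adj B = A"
  proof -
    have BT: "B * T = four_block_mat A1 (A2 * U3) (0\<^sub>m m 1) (U3 * T3)"
      unfolding B_def T_def
      by (subst mult_four_block_mat[of _ 1 1 _ m _ m _ _ 1 _ m], use u3 spl T3 in auto)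
    have "B * T * adj B = four_block_mat A1 (A2 * U3 * adj U3) (0\<^sub>m m 1) A3"
      unfolding BT adjB A3
      by (subst mult_four_block_mat[of _ 1 1 _ m _ m _ _ 1 _ m], use u3 spl T3 in auto)
    also have "A2 * U3 * adj U3 = A2" using u3 spl by (simp add: assoc_mult_mat[of _ 1 m _ m _ m])
    finally show ?thesis using spl(5) A0 by simp
  qed
  ultimately show ?thesis using unitary_mat_block[OF U3, folded B_def] T by metis
qed

lemma schur_decomposition_unitary:
  assumes "A \<in> carrier_mat n n"
  shows "\<exists>U T. unitary_mat n U \<and> T \<in> carrier_mat n n \<and> upper_triangular T \<and> A = U * T * adj U"
  using assms
proof (induction n arbitrary: A)
  case 0
  then have "unitary_mat 0 (1\<^sub>m 0) \<and> upper_triangular A \<and> A = 1\<^sub>m 0 * A * adj (1\<^sub>m 0)"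
    by (auto intro: unitary_matI simp: upper_triangular_def)
  then show ?case using 0 by blast
next
  case (Suc m A)
  obtain es where "char_poly A = (\<Prod>a\<leftarrow>es. [:- a, 1:])" "length es = Suc m"
    using char_poly_factorized[OF Suc.prems] by auto
  then obtain e where "poly (char_poly A) e = 0" by (cases es, auto)
  then obtain v where "eigenvector A v e"
    using eigenvalue_root_char_poly[OF Suc.prems] unfolding eigenvalue_def by auto
  then obtain W where W: "unitary_mat (Suc m) W"
    and col0: "\<forall>i<Suc m. (adj W * A * W) $$ (i,0) = (if i = 0 then e else 0)"
    using unitary_mat_deflation[OF Suc.prems] by blast
  note w = unitary_matD[OF W]
  define A' where "A' = adj W * A * W"
  have A': "A' \<in> carrier_mat (Suc m) (Suc m)" unfolding A'_def using w Suc.prems by simp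
  obtain A1 A2 A0 A3 where sp: "split_block A' 1 1 = (A1,A2,A0,A3)"
    by (cases "split_block A' 1 1", auto)
  have "A0 = 0\<^sub>m m 1"
    using sp col0 A' unfolding split_block_def Let_def A'_def by (intro eq_matI, auto)
  moreover have "A3 \<in> carrier_mat m m" using split_block(4)[OF sp] A' by auto
  then obtain U3 T3 where "unitary_mat m U3" "T3 \<in> carrier_mat m m" "upper_triangular T3"
    "A3 = U3 * T3 * adj U3" using Suc.IH by blast
  ultimately obtain B T where B: "unitary_mat (Suc m) B" and T: "T \<in> carrier_mat (Suc m) (Suc m)"
    "upper_triangular T" and A'BT: "A' = B * T * adj B"
    using unitary_triangular_block[OF sp A'] by blast
  have "A = W * A' * adj W"
    unfolding A'_def using w Suc.prems unitary_mat_cancel(2)[OF W Suc.prems]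
    by (simp add: assoc_mult_mat[of _ "Suc m" "Suc m" _ "Suc m" _ "Suc m"])
  also have "\<dots> = (W * B) * T * adj (W * B)"
    unfolding A'BT using w unitary_matD[OF B] T
    by (simp add: mat_adjoint_mult[of _ "Suc m" "Suc m"] assoc_mult_mat[of _ "Suc m" "Suc m" _ "Suc m" _ "Suc m"])
  finally show ?case using unitary_mat_mult[OF W B] T by blast
qed


section \<open>Spectral theorem for Hermitian matrices\<close>

definition diag_real :: "nat \<Rightarrow> (nat \<Rightarrow> real) \<Rightarrow> complex mat" where
  "diag_real n f = mat n n (\<lambda>(i,j). if i = j then complex_of_real (f i) else 0)"

lemma diag_real_carrier[simp]: "diag_real n f \<in> carrier_mat n n"
  unfolding diag_real_def by auto

lemma diag_real_dim[simp]: "dim_row (diag_real n f) = n" "dim_col (diag_real n f) = n"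
  unfolding diag_real_def by auto

lemma diag_real_index[simp]:
  "i < n \<Longrightarrow> j < n \<Longrightarrow> diag_real n f $$ (i,j) = (if i = j then complex_of_real (f i) else 0)"
  unfolding diag_real_def by auto

lemma diag_real_cong: "(\<And>i. i < n \<Longrightarrow> f i = g i) \<Longrightarrow> diag_real n f = diag_real n g"
  by (intro eq_matI, auto)

lemma diag_real_one: "diag_real n (\<lambda>_. 1) = 1\<^sub>m n"
  by (intro eq_matI, auto)

lemma mult_diag_real_index:
  assumes Y: "Y \<in> carrier_mat n n" and i: "i < n" and j: "j < n"
  shows "(Y * diag_real n f) $$ (i,j) = Y $$ (i,j) * f j"
    "(diag_real n f * Y) $$ (i,j) = f i * Y $$ (i,j)"
proof -
  have "(Y * diag_real n f) $$ (i,j) = (\<Sum>l = 0..<n. Y $$ (i,l) * diag_real n f $$ (l,j))"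
    using Y i j by (simp add: scalar_prod_def)
  also have "\<dots> = (\<Sum>l \<in> {j}. Y $$ (i,l) * diag_real n f $$ (l,j))"
    using i j by (intro sum.mono_neutral_right, auto)
  finally show "(Y * diag_real n f) $$ (i,j) = Y $$ (i,j) * f j" using j by simp
  have "(diag_real n f * Y) $$ (i,j) = (\<Sum>l = 0..<n. diag_real n f $$ (i,l) * Y $$ (l,j))"
    using Y i j by (simp add: scalar_prod_def)
  also have "\<dots> = (\<Sum>l \<in> {i}. diag_real n f $$ (i,l) * Y $$ (l,j))"
    using i j by (intro sum.mono_neutral_right, auto)
  finally show "(diag_real n f * Y) $$ (i,j) = f i * Y $$ (i,j)" using i by simp
qed

lemma diag_real_mult: "diag_real n f * diag_real n g = diag_real n (\<lambda>i. f i * g i)"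
  by (rule eq_matI, subst mult_diag_real_index(1)[OF diag_real_carrier], auto)

lemma hermitian_spectral:
  assumes A: "A \<in> carrier_mat n n" and h: "adj A = A"
  shows "\<exists>U f. unitary_mat n U \<and> A = U * diag_real n f * adj U"
proof -
  from schur_decomposition_unitary[OF A] obtain U T where U: "unitary_mat n U"
    and T: "T \<in> carrier_mat n n" and ut: "upper_triangular T" and AT: "A = U * T * adj U"
    by auto
  note u = unitary_matD[OF U]
  have "T = adj U * A * U"
    unfolding AT using u T unitary_mat_cancel(1)[OF U T]
    by (simp add: assoc_mult_mat[of _ n n _ n _ n])
  then have hT: "adj T = T" using u A h
    by (simp add: mat_adjoint_mult[of _ n n _ n] assoc_mult_mat[of _ n n _ n _ n])
  have "T = diag_real n (\<lambda>i. Re (T $$ (i,i)))"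
  proof (rule eq_matI)
    fix i j assume "i < dim_row (diag_real n (\<lambda>i. Re (T $$ (i,i))))"
      "j < dim_col (diag_real n (\<lambda>i. Re (T $$ (i,i))))"
    hence i: "i < n" and j: "j < n" by auto
    have cj: "T $$ (i,j) = cnj (T $$ (j,i))"
      using arg_cong[OF hT, of "\<lambda>M. M $$ (i,j)"] T i j by simp
    show "T $$ (i,j) = diag_real n (\<lambda>i. Re (T $$ (i,i))) $$ (i,j)"
    proof (cases "i = j")
      case True
      then show ?thesis using cj i by (simp add: complex_eq_iff)
    next
      case False
      then have "T $$ (i,j) = 0 \<or> T $$ (j,i) = 0" using ut i j T by (cases "j < i", auto simp: upper_triangular_def)
      then show ?thesis using cj i j False by auto
    qed
  qed (use T in auto)
  then show ?thesis using AT U by metis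
qed

lemma unitary_conj_mult:
  assumes U: "unitary_mat n U" and M1: "M1 \<in> carrier_mat n n" and M2: "M2 \<in> carrier_mat n n"
  shows "(U * M1 * adj U) * (U * M2 * adj U) = U * (M1 * M2) * adj U"
  using unitary_matD[OF U] M1 M2 unitary_mat_cancel(1)[OF U, of "M2 * adj U" n]
  by (simp add: assoc_mult_mat[of _ n n _ n _ n])

lemma unitary_conj_inj:
  assumes U: "unitary_mat n U" and M1: "M1 \<in> carrier_mat n n" and M2: "M2 \<in> carrier_mat n n"
    and eq: "U * M1 * adj U = U * M2 * adj U"
  shows "M1 = M2"
proof -
  note u = unitary_matD[OF U]
  have "adj U * (U * M * adj U) * U = M" if M: "M \<in> carrier_mat n n" for M
    using u M unitary_mat_cancel(1)[OF U M] by (simp add: assoc_mult_mat[of _ n n _ n _ n])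
  then show ?thesis using M1 M2 eq by metis
qed

lemma commute_unitary_diag:
  assumes U: "unitary_mat n U" and X: "X \<in> carrier_mat n n"
    and comm: "X * (U * diag_real n f * adj U) = (U * diag_real n f * adj U) * X"
    and fg: "\<And>i j. i < n \<Longrightarrow> j < n \<Longrightarrow> f i = f j \<Longrightarrow> g i = g j"
  shows "X * (U * diag_real n g * adj U) = (U * diag_real n g * adj U) * X"
proof -
  note u = unitary_matD[OF U]
  define Y where "Y = adj U * X * U"
  have Y: "Y \<in> carrier_mat n n" unfolding Y_def using u X by simp
  have XY: "X = U * Y * adj U"
    unfolding Y_def using u X unitary_mat_cancel(2)[OF U X]
    by (simp add: assoc_mult_mat[of _ n n _ n _ n])
  have e: "U * (Y * diag_real n f) * adj U = U * (diag_real n f * Y) * adj U"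
    using comm unfolding XY unitary_conj_mult[OF U Y diag_real_carrier]
      unitary_conj_mult[OF U diag_real_carrier Y] .
  have YD: "Y * diag_real n f = diag_real n f * Y"
    by (rule unitary_conj_inj[OF U _ _ e], use Y in auto)
  have "Y * diag_real n g = diag_real n g * Y"
  proof (rule eq_matI)
    fix i j assume "i < dim_row (diag_real n g * Y)" "j < dim_col (diag_real n g * Y)"
    hence i: "i < n" and j: "j < n" using Y by auto
    have "Y $$ (i,j) * f j = f i * Y $$ (i,j)"
      using arg_cong[OF YD, of "\<lambda>M. M $$ (i,j)"] unfolding mult_diag_real_index[OF Y i j] .
    then have "Y $$ (i,j) \<noteq> 0 \<Longrightarrow> g i = g j" using fg[OF i j] by (simp add: mult.commute)
    then show "(Y * diag_real n g) $$ (i,j) = (diag_real n g * Y) $$ (i,j)"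
      unfolding mult_diag_real_index[OF Y i j] by (cases "Y $$ (i,j) = 0", auto simp: mult.commute)
  qed (use Y in auto)
  then show ?thesis
    unfolding XY unitary_conj_mult[OF U Y diag_real_carrier] unitary_conj_mult[OF U diag_real_carrier Y]
    by simp
qed


section \<open>Definiteness through the spectrum\<close>

lemma diag_real_mult_vec:
  assumes w: "w \<in> carrier_vec n"
  shows "diag_real n f *\<^sub>v w = vec n (\<lambda>i. complex_of_real (f i) * w $ i)"
proof (rule eq_vecI)
  fix i assume "i < dim_vec (vec n (\<lambda>i. complex_of_real (f i) * w $ i))"
  hence i: "i < n" by simp
  have "row (diag_real n f) i = complex_of_real (f i) \<cdot>\<^sub>v unit_vec n i"
    using i by (intro eq_vecI, auto)
  then show "(diag_real n f *\<^sub>v w) $ i = vec n (\<lambda>i. complex_of_real (f i) * w $ i) $ i"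
    using i w by simp
qed simp

lemma cscalar_prod_diag_real:
  assumes w: "w \<in> carrier_vec n"
  shows "conjugate w \<bullet> (diag_real n f *\<^sub>v w) = complex_of_real (\<Sum>i = 0..<n. f i * (cmod (w $ i))\<^sup>2)"
proof -
  have "conjugate w \<bullet> (diag_real n f *\<^sub>v w) = (\<Sum>i = 0..<n. cnj (w $ i) * (complex_of_real (f i) * w $ i))"
    unfolding diag_real_mult_vec[OF w] using w by (simp add: scalar_prod_def)
  also have "\<dots> = (\<Sum>i = 0..<n. complex_of_real (f i * (cmod (w $ i))\<^sup>2))"
    using complex_norm_square by (simp add: ac_simps)
  finally show ?thesis by simp
qed

lemma psd_diag_real: "(\<And>i. i < n \<Longrightarrow> f i \<ge> 0) \<Longrightarrow> psd_mat n (diag_real n f)"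
  unfolding psd_mat_def hermitian_mat_def
  by (auto simp: cscalar_prod_diag_real intro!: sum_nonneg)

lemma pd_diag_real:
  assumes f: "\<And>i. i < n \<Longrightarrow> f i > 0"
  shows "pd_mat n (diag_real n f)"
proof -
  have "0 < (\<Sum>i = 0..<n. f i * (cmod (v $ i))\<^sup>2)"
    if v: "v \<in> carrier_vec n" and v0: "v \<noteq> 0\<^sub>v n" for v
  proof -
    obtain i where i: "i < n" and vi: "v $ i \<noteq> 0"
      using v v0 by (metis carrier_vecD eq_vecI index_zero_vec(1) index_zero_vec(2))
    have "\<And>j. j < n \<Longrightarrow> 0 \<le> f j" using f less_imp_le by blast
    then show ?thesis using f[OF i] i vi by (intro sum_pos2[of _ i], auto)
  qed
  then show ?thesis unfolding pd_mat_def hermitian_mat_def by (auto simp: cscalar_prod_diag_real)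
qed

lemma cscalar_prod_unitary_diag:
  assumes U: "unitary_mat n U" and v: "v \<in> carrier_vec n"
  shows "conjugate v \<bullet> ((U * diag_real n f * adj U) *\<^sub>v v)
     = complex_of_real (\<Sum>j = 0..<n. f j * (cmod ((adj U *\<^sub>v v) $ j))\<^sup>2)"
  using unitary_matD(2)[OF U] v
  by (simp add: cscalar_prod_congruence[OF unitary_matD(1)[OF U] diag_real_carrier v]
      cscalar_prod_diag_real)

lemma mat_adjoint_mult_col_unitary:
  assumes U: "unitary_mat n U" and i: "i < n"
  shows "adj U *\<^sub>v col U i = unit_vec n i"
proof (rule eq_vecI)
  note u = unitary_matD[OF U]
  fix j assume "j < dim_vec (unit_vec n i)"
  hence j: "j < n" by simp
  have "(adj U *\<^sub>v col U i) $ j = (adj U * U) $$ (j,i)"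
    using u(1,2) i j by simp
  then show "(adj U *\<^sub>v col U i) $ j = unit_vec n i $ j" unfolding u(3) using i j by simp
qed (use unitary_matD[OF U] in simp)

lemma spectral_coeff:
  assumes U: "unitary_mat n U" and i: "i < n"
  shows "Re (conjugate (col U i) \<bullet> ((U * diag_real n f * adj U) *\<^sub>v col U i)) = f i"
proof -
  have "col U i \<in> carrier_vec n" using unitary_matD[OF U] i by (intro carrier_vecI, auto)
  moreover have "(\<Sum>j = 0..<n. f j * (cmod (unit_vec n i $ j))\<^sup>2)
      = (\<Sum>j \<in> {i}. f j * (cmod (unit_vec n i $ j))\<^sup>2)"
    using i by (intro sum.mono_neutral_right, auto)
  ultimately show ?thesis
    using i by (simp add: cscalar_prod_unitary_diag[OF U] mat_adjoint_mult_col_unitary[OF U i])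
qed

lemma unitary_col_nonzero:
  assumes U: "unitary_mat n U" and i: "i < n"
  shows "col U i \<noteq> 0\<^sub>v n"
proof
  assume "col U i = 0\<^sub>v n"
  hence "adj U *\<^sub>v col U i = 0\<^sub>v n" using unitary_matD[OF U] by (intro eq_vecI, auto)
  moreover have "unit_vec n i \<noteq> (0\<^sub>v n :: complex vec)" using unit_vec_nonzero[OF i] .
  ultimately show False using mat_adjoint_mult_col_unitary[OF U i] by simp
qed

lemma psd_spectral:
  assumes "psd_mat n A"
  shows "\<exists>U f. unitary_mat n U \<and> (\<forall>i<n. f i \<ge> 0) \<and> A = U * diag_real n f * adj U"
proof -
  obtain U f where U: "unitary_mat n U" and A: "A = U * diag_real n f * adj U"
    using hermitian_spectral[OF psd_mat_carrier[OF assms] psd_mat_adjoint[OF assms]] by auto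
  have "f i \<ge> 0" if i: "i < n" for i
  proof -
    have "col U i \<in> carrier_vec n" using unitary_matD[OF U] i by (intro carrier_vecI, auto)
    then show ?thesis using assms spectral_coeff[OF U i, of f] unfolding psd_mat_def A by auto
  qed
  then show ?thesis using U A by blast
qed

lemma pd_spectral:
  assumes "pd_mat n A"
  shows "\<exists>U f. unitary_mat n U \<and> (\<forall>i<n. f i > 0) \<and> A = U * diag_real n f * adj U"
proof -
  obtain U f where U: "unitary_mat n U" and A: "A = U * diag_real n f * adj U"
    using hermitian_spectral[OF pd_mat_carrier[OF assms] pd_mat_adjoint[OF assms]] by auto
  have "f i > 0" if i: "i < n" for i
  proof -
    have "col U i \<in> carrier_vec n" using unitary_matD[OF U] i by (intro carrier_vecI, auto)
    then show ?thesis
      using assms spectral_coeff[OF U i, of f] unitary_col_nonzero[OF U i]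
      unfolding pd_mat_def A by auto
  qed
  then show ?thesis using U A by blast
qed

lemma pd_unitary_diag:
  assumes U: "unitary_mat n U" and f: "\<And>i. i < n \<Longrightarrow> f i > 0"
  shows "pd_mat n (U * diag_real n f * adj U)"
  using pd_congruence[OF pd_diag_real[OF f] unitary_matD(1)[OF U] unitary_matD(1,4)[OF U]] .


section \<open>Square roots and inverses\<close>

lemma unitary_diag_square:
  assumes U: "unitary_mat n U" and f: "\<And>i. i < n \<Longrightarrow> f i \<ge> 0"
  shows "(U * diag_real n (\<lambda>i. sqrt (f i)) * adj U) * (U * diag_real n (\<lambda>i. sqrt (f i)) * adj U)
    = U * diag_real n f * adj U"
  unfolding unitary_conj_mult[OF U diag_real_carrier diag_real_carrier] diag_real_mult
  using f by (intro arg_cong[of _ _ "\<lambda>M. U * M * adj U"] diag_real_cong, simp)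

lemma psd_sqrt_exists:
  assumes "psd_mat n A"
  shows "\<exists>B. psd_mat n B \<and> B * B = A"
proof -
  obtain U f where U: "unitary_mat n U" and f: "\<forall>i<n. f i \<ge> 0"
    and A: "A = U * diag_real n f * adj U"
    using psd_spectral[OF assms] by auto
  have "psd_mat n (U * diag_real n (\<lambda>i. sqrt (f i)) * adj U)"
    using psd_congruence[OF psd_diag_real unitary_matD(1)[OF U]] f by simp
  then show ?thesis using unitary_diag_square[OF U] f unfolding A by blast
qed

lemma commute_psd_of_commute_square:
  assumes B: "psd_mat n B" and X: "X \<in> carrier_mat n n"
    and comm: "X * (B * B) = (B * B) * X"
  shows "X * B = B * X"
proof -
  obtain U b where U: "unitary_mat n U" and b: "\<forall>i<n. b i \<ge> 0"
    and Bd: "B = U * diag_real n b * adj U"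
    using psd_spectral[OF B] by auto
  have BB: "B * B = U * diag_real n (\<lambda>i. b i * b i) * adj U"
    unfolding Bd unitary_conj_mult[OF U diag_real_carrier diag_real_carrier] diag_real_mult ..
  show ?thesis unfolding Bd
    by (rule commute_unitary_diag[OF U X comm[unfolded BB]],
        use b in \<open>metis power2_eq_iff_nonneg power2_eq_square\<close>)
qed

lemma psd_mult_vec_zero:
  assumes B: "psd_mat n B" and w: "w \<in> carrier_vec n"
    and z: "Re (conjugate w \<bullet> (B *\<^sub>v w)) = 0"
  shows "B *\<^sub>v w = 0\<^sub>v n"
proof -
  obtain U b where U: "unitary_mat n U" and b: "\<forall>i<n. b i \<ge> 0"
    and Bd: "B = U * diag_real n b * adj U"
    using psd_spectral[OF B] by auto
  note u = unitary_matD[OF U]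
  define x where "x = adj U *\<^sub>v w"
  have x: "x \<in> carrier_vec n" unfolding x_def using u(2) w by simp
  have "(\<Sum>j = 0..<n. b j * (cmod (x $ j))\<^sup>2) = 0"
    using z unfolding Bd cscalar_prod_unitary_diag[OF U w] x_def by simp
  then have "\<forall>j\<in>{0..<n}. b j * (cmod (x $ j))\<^sup>2 = 0"
    by (subst (asm) sum_nonneg_eq_0_iff, use b in auto)
  then have "diag_real n b *\<^sub>v x = 0\<^sub>v n"
    unfolding diag_real_mult_vec[OF x] by (intro eq_vecI, auto)
  then show ?thesis
    unfolding Bd congruence_mult_vec[OF u(1) diag_real_carrier w] x_def[symmetric]
    using u by (intro eq_vecI, auto)
qed

lemma psd_mult_vec_zero_of_sum:
  assumes B: "psd_mat n B" and C: "psd_mat n C" and w: "w \<in> carrier_vec n"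
    and sum: "B *\<^sub>v w + C *\<^sub>v w = 0\<^sub>v n"
  shows "B *\<^sub>v w = 0\<^sub>v n"
proof -
  have "conjugate w \<bullet> (B *\<^sub>v w) + conjugate w \<bullet> (C *\<^sub>v w) = conjugate w \<bullet> (B *\<^sub>v w + C *\<^sub>v w)"
    using w psd_mat_carrier[OF B] psd_mat_carrier[OF C]
    by (intro scalar_prod_add_distrib[symmetric, of _ n], auto)
  also have "\<dots> = 0" unfolding sum using w by simp
  finally have "Re (conjugate w \<bullet> (B *\<^sub>v w)) + Re (conjugate w \<bullet> (C *\<^sub>v w)) = 0"
    by (metis plus_complex.sel(1) zero_complex.sel(1))
  moreover have "Re (conjugate w \<bullet> (B *\<^sub>v w)) \<ge> 0" "Re (conjugate w \<bullet> (C *\<^sub>v w)) \<ge> 0"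
    using B C w unfolding psd_mat_def by auto
  ultimately show ?thesis using psd_mult_vec_zero[OF B w] by simp
qed

text \<open>With \<open>w = (B - C) v\<close> one has \<open>B w = - C w\<close> because \<open>B\<close>
  and \<open>C\<close> commute, so \<open>B w = C w = 0\<close> and hence \<open>w\<^sup>* w = (B w)\<^sup>* v - (C w)\<^sup>* v = 0\<close>.\<close>

lemma psd_sqrt_unique:
  assumes B: "psd_mat n B" and C: "psd_mat n C" and eq: "B * B = C * C"
  shows "B = C"
proof -
  have Bc: "B \<in> carrier_mat n n" and Cc: "C \<in> carrier_mat n n" using B C psd_mat_carrier by auto
  have "B * (C * C) = (C * C) * B" unfolding eq[symmetric] using Bc by simp
  hence comm: "B * C = C * B" by (rule commute_psd_of_commute_square[OF C Bc])
  show ?thesis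
  proof (rule mat_eq_by_mult_vec[OF Bc Cc])
    fix v :: "complex vec" assume v: "v \<in> carrier_vec n"
    define w where "w = B *\<^sub>v v - C *\<^sub>v v"
    have Bv: "B *\<^sub>v v \<in> carrier_vec n" and Cv: "C *\<^sub>v v \<in> carrier_vec n" using Bc Cc v by auto
    have w: "w \<in> carrier_vec n" unfolding w_def using Bv Cv by simp
    have "B *\<^sub>v w = (B * B) *\<^sub>v v - (B * C) *\<^sub>v v"
      unfolding w_def using Bc Cc v by (simp add: mult_minus_distrib_mat_vec[OF Bc Bv Cv])
    moreover have "C *\<^sub>v w = (B * C) *\<^sub>v v - (B * B) *\<^sub>v v"
      unfolding w_def eq comm using Bc Cc v by (simp add: mult_minus_distrib_mat_vec[OF Cc Bv Cv])
    ultimately have "B *\<^sub>v w + C *\<^sub>v w = 0\<^sub>v n" "C *\<^sub>v w + B *\<^sub>v w = 0\<^sub>v n"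
      using Bc Cc v by (auto intro!: eq_vecI)
    then have Bw: "B *\<^sub>v w = 0\<^sub>v n" and Cw: "C *\<^sub>v w = 0\<^sub>v n"
      using psd_mult_vec_zero_of_sum[OF B C w] psd_mult_vec_zero_of_sum[OF C B w] by auto
    have "conjugate w \<bullet> w = conjugate w \<bullet> (B *\<^sub>v v) - conjugate w \<bullet> (C *\<^sub>v v)"
      unfolding w_def by (rule scalar_prod_minus_distrib[of _ n], use w Bv Cv in auto)
    also have "\<dots> = 0"
      using cscalar_prod_mult_mat_vec[OF Bc w v] cscalar_prod_mult_mat_vec[OF Cc w v]
      using psd_mat_adjoint[OF B] psd_mat_adjoint[OF C] Bw Cw v by simp
    finally have "w = 0\<^sub>v n"
      using conjugate_square_eq_0_vec[OF w] conjugate_vec_sprod_comm[OF w w] by simp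
    then show "B *\<^sub>v v = C *\<^sub>v v" unfolding w_def using Bv Cv
      by (metis carrier_vecD index_minus_vec(1) index_zero_vec(1) eq_vecI right_minus_eq)
  qed
qed

lemma mat_inv_eqI:
  fixes A B :: "complex mat"
  assumes A: "A \<in> carrier_mat n n" and B: "B \<in> carrier_mat n n" and AB: "A * B = 1\<^sub>m n"
  shows "mat_inv n A = B"
  unfolding mat_inv_def
proof (rule the_equality)
  show "B \<in> carrier_mat n n \<and> A * B = 1\<^sub>m n \<and> B * A = 1\<^sub>m n"
    using mat_mult_left_right_inverse[OF A B AB] B AB by auto
  fix B' assume "B' \<in> carrier_mat n n \<and> A * B' = 1\<^sub>m n \<and> B' * A = 1\<^sub>m n"
  then show "B' = B" using A B AB
    by (metis assoc_mult_mat left_mult_one_mat right_mult_one_mat)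
qed

lemma mat_sqrt_eqI: "psd_mat n B \<Longrightarrow> mat_sqrt n (B * B) = B"
  unfolding mat_sqrt_def by (rule the_equality, auto intro: psd_sqrt_unique)

lemma mat_sqrt_psd:
  assumes "psd_mat n A"
  shows "psd_mat n (mat_sqrt n A)" "mat_sqrt n A * mat_sqrt n A = A"
  using psd_sqrt_exists[OF assms] mat_sqrt_eqI by metis+

lemma mat_sqrt_pd:
  assumes A: "pd_mat n A"
  shows "pd_mat n (mat_sqrt n A)" "mat_sqrt n A * mat_sqrt n A = A"
proof -
  obtain U f where U: "unitary_mat n U" and f: "\<forall>i<n. f i > 0"
    and Ad: "A = U * diag_real n f * adj U"
    using pd_spectral[OF A] by auto
  define B where "B = U * diag_real n (\<lambda>i. sqrt (f i)) * adj U"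
  have B: "pd_mat n B" unfolding B_def using f by (intro pd_unitary_diag[OF U], auto)
  have "B * B = A" unfolding B_def Ad using f by (intro unitary_diag_square[OF U], auto)
  then show "pd_mat n (mat_sqrt n A)" using mat_sqrt_eqI[OF pd_imp_psd_mat[OF B]] B by simp
  show "mat_sqrt n A * mat_sqrt n A = A" using mat_sqrt_psd(2)[OF pd_imp_psd_mat[OF A]] .
qed

lemma mat_inv_pd:
  assumes A: "pd_mat n A"
  shows "pd_mat n (mat_inv n A)" "A * mat_inv n A = 1\<^sub>m n" "mat_inv n A * A = 1\<^sub>m n"
proof -
  obtain U f where U: "unitary_mat n U" and f: "\<forall>i<n. f i > 0"
    and Ad: "A = U * diag_real n f * adj U"
    using pd_spectral[OF A] by auto
  define B where "B = U * diag_real n (\<lambda>i. 1 / f i) * adj U"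
  have B: "pd_mat n B" unfolding B_def using f by (intro pd_unitary_diag[OF U], auto)
  have Ac: "A \<in> carrier_mat n n" and Bc: "B \<in> carrier_mat n n" using A B pd_mat_carrier by auto
  have "A * B = U * diag_real n (\<lambda>i. f i * (1 / f i)) * adj U"
    unfolding Ad B_def unitary_conj_mult[OF U diag_real_carrier diag_real_carrier] diag_real_mult ..
  also have "diag_real n (\<lambda>i. f i * (1 / f i)) = 1\<^sub>m n"
    unfolding diag_real_one[symmetric] using f by (intro diag_real_cong, auto)
  finally have AB: "A * B = 1\<^sub>m n" using unitary_matD[OF U] by simp
  show "pd_mat n (mat_inv n A)" "A * mat_inv n A = 1\<^sub>m n" "mat_inv n A * A = 1\<^sub>m n"
    unfolding mat_inv_eqI[OF Ac Bc AB] using B AB mat_mult_left_right_inverse[OF Ac Bc AB] by auto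
qed


section \<open>The generalized fidelity along the segment\<close>

lemma mtrace_mult_comm:
  assumes A: "A \<in> carrier_mat n m" and B: "B \<in> carrier_mat m n"
  shows "mtrace (A * B) = mtrace (B * A)"
proof -
  have "mtrace (A * B) = (\<Sum>i<n. \<Sum>l = 0..<m. A $$ (i,l) * B $$ (l,i))"
    unfolding mtrace_def using A B by (simp add: scalar_prod_def)
  also have "\<dots> = (\<Sum>l = 0..<m. \<Sum>i<n. A $$ (i,l) * B $$ (l,i))" by (rule sum.swap)
  also have "\<dots> = mtrace (B * A)"
    unfolding mtrace_def using A B
    by (auto simp: scalar_prod_def atLeast0LessThan mult.commute intro!: sum.cong)
  finally show ?thesis .
qed

text \<open>In rewrite form this lets the simplifier discharge carrier conditions whose dimension is
  not determined by the rewritten term, as in \<open>assoc_mult_mat_square\<close>.\<close>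

lemma mat_adjoint_carrier_iff[simp]: "adj A \<in> carrier_mat n m \<longleftrightarrow> A \<in> carrier_mat m n"
  unfolding carrier_mat_def by auto

lemma assoc_mult_mat_square[simp]:
  "A \<in> carrier_mat n n \<Longrightarrow> B \<in> carrier_mat n n \<Longrightarrow> C \<in> carrier_mat n n \<Longrightarrow> A * B * C = A * (B * C)"
  by simp

lemma mult_one_mat_square[simp]:
  fixes A :: "'a :: semiring_1 mat"
  shows "A \<in> carrier_mat n n \<Longrightarrow> A * 1\<^sub>m n = A" "A \<in> carrier_mat n n \<Longrightarrow> 1\<^sub>m n * A = A"
  by simp_all

lemma mult_inverse_cancel:
  fixes A B Z :: "'a :: semiring_1 mat"
  assumes "A * B = 1\<^sub>m n" "A \<in> carrier_mat n n" "B \<in> carrier_mat n n" "Z \<in> carrier_mat n n"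
  shows "A * (B * Z) = Z"
proof -
  have "A * (B * Z) = (A * B) * Z" using assms(2-4) by simp
  also have "\<dots> = Z" using assms by simp
  finally show ?thesis .
qed

lemma mult_smult_add_distrib:
  fixes a b :: complex
  assumes A: "A \<in> carrier_mat n n" and M1: "M1 \<in> carrier_mat n n" and M2: "M2 \<in> carrier_mat n n"
  shows "A * (a \<cdot>\<^sub>m M1 + b \<cdot>\<^sub>m M2) = a \<cdot>\<^sub>m (A * M1) + b \<cdot>\<^sub>m (A * M2)"
    "(a \<cdot>\<^sub>m M1 + b \<cdot>\<^sub>m M2) * A = a \<cdot>\<^sub>m (M1 * A) + b \<cdot>\<^sub>m (M2 * A)"
proof -
  have "A * (a \<cdot>\<^sub>m M1 + b \<cdot>\<^sub>m M2) = A * (a \<cdot>\<^sub>m M1) + A * (b \<cdot>\<^sub>m M2)"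
    by (rule mult_add_distrib_mat, use assms in auto)
  then show "A * (a \<cdot>\<^sub>m M1 + b \<cdot>\<^sub>m M2) = a \<cdot>\<^sub>m (A * M1) + b \<cdot>\<^sub>m (A * M2)"
    using mult_smult_distrib[OF A M1] mult_smult_distrib[OF A M2] by simp
  have "(a \<cdot>\<^sub>m M1 + b \<cdot>\<^sub>m M2) * A = (a \<cdot>\<^sub>m M1) * A + (b \<cdot>\<^sub>m M2) * A"
    by (rule add_mult_distrib_mat, use assms in auto)
  then show "(a \<cdot>\<^sub>m M1 + b \<cdot>\<^sub>m M2) * A = a \<cdot>\<^sub>m (M1 * A) + b \<cdot>\<^sub>m (M2 * A)"
    using mult_smult_assoc_mat[OF M1 A] mult_smult_assoc_mat[OF M2 A] by simp
qed

lemma commute_mat_inv: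
  fixes X K Ki :: "'a :: semiring_1 mat"
  assumes X: "X \<in> carrier_mat n n" and K: "K \<in> carrier_mat n n" and Ki: "Ki \<in> carrier_mat n n"
    and XK: "X * K = K * X" and KKi: "K * Ki = 1\<^sub>m n" and KiK: "Ki * K = 1\<^sub>m n"
  shows "X * Ki = Ki * X"
proof -
  have "Ki * X = Ki * X * (K * Ki)" using X Ki unfolding KKi by simp
  also have "\<dots> = Ki * (X * K) * Ki" using X K Ki by simp
  also have "\<dots> = (Ki * K) * X * Ki" unfolding XK using X K Ki by simp
  finally show ?thesis using X Ki unfolding KiK by simp
qed

lemma pd_congruence_pd:
  assumes M: "pd_mat n M" and C: "pd_mat n C"
  shows "pd_mat n (C * M * C)"
  using pd_congruence[OF M pd_mat_carrier[OF C] pd_mat_carrier[OF mat_inv_pd(1)[OF C]]]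
    mat_inv_pd(3)[OF C] pd_mat_adjoint[OF C] by simp

lemma psd_mult_commute:
  assumes A: "psd_mat n A" and B: "psd_mat n B" and AB: "A * B = B * A"
  shows "psd_mat n (A * B)"
proof -
  define S where "S = mat_sqrt n A"
  have S: "psd_mat n S" and SS: "S * S = A" unfolding S_def using mat_sqrt_psd[OF A] by auto
  have Sc: "S \<in> carrier_mat n n" and Bc: "B \<in> carrier_mat n n"
    using S B psd_mat_carrier by auto
  have BS: "B * S = S * B" using commute_psd_of_commute_square[OF S Bc] AB SS by simp
  have "A * B = S * (S * B)" unfolding SS[symmetric] using Sc Bc by simp
  also have "\<dots> = S * (B * S)" by (simp only: BS)
  also have "\<dots> = S * B * adj S" unfolding psd_mat_adjoint[OF S] using Sc Bc by simp
  finally show ?thesis using psd_congruence[OF B Sc] by simp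
qed

lemma pd_inverse_sqrt_commuting:
  assumes K: "pd_mat n K" and X: "X \<in> carrier_mat n n" and XK: "X * K = K * X"
  obtains L where "pd_mat n L" "L * K * L = 1\<^sub>m n" "L * X = X * L"
proof
  define Ki where "Ki = mat_inv n K"
  define L where "L = mat_sqrt n Ki"
  have Ki: "pd_mat n Ki" "K * Ki = 1\<^sub>m n" "Ki * K = 1\<^sub>m n" unfolding Ki_def using mat_inv_pd[OF K] by auto
  have Kc: "K \<in> carrier_mat n n" and Kic: "Ki \<in> carrier_mat n n"
    using K Ki pd_mat_carrier by auto
  show L: "pd_mat n L" unfolding L_def by (rule mat_sqrt_pd(1)[OF Ki(1)])
  have LL: "L * L = Ki" unfolding L_def by (rule mat_sqrt_pd(2)[OF Ki(1)])
  have Lc: "L \<in> carrier_mat n n" using L pd_mat_carrier by auto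
  have KL: "K * L = L * K"
    using Ki by (intro commute_psd_of_commute_square[OF pd_imp_psd_mat[OF L] Kc], simp add: LL)
  have "L * K * L = (L * L) * K" using Lc Kc by (simp add: KL)
  then show "L * K * L = 1\<^sub>m n" unfolding LL Ki(3) .
  have "X * Ki = Ki * X" by (rule commute_mat_inv[OF X Kc Kic XK Ki(2,3)])
  then show "L * X = X * L"
    by (intro commute_psd_of_commute_square[OF pd_imp_psd_mat[OF L] X, symmetric], simp add: LL)
qed

lemma mat_sqrt_inv_sqrt:
  assumes R: "pd_mat n R"
  shows "mat_sqrt n R * mat_inv n R * mat_sqrt n R = 1\<^sub>m n"
proof -
  define S where "S = mat_sqrt n R"
  define Si where "Si = mat_inv n S"
  have S: "pd_mat n S" "S * S = R" unfolding S_def using mat_sqrt_pd[OF R] by auto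
  have Si: "S * Si = 1\<^sub>m n" "Si * S = 1\<^sub>m n" unfolding Si_def using mat_inv_pd[OF S(1)] by auto
  have Sc: "S \<in> carrier_mat n n" and Sic: "Si \<in> carrier_mat n n"
    unfolding Si_def using S(1) mat_inv_pd(1)[OF S(1)] pd_mat_carrier by auto
  have "R * (Si * Si) = S * (S * Si) * Si" unfolding S(2)[symmetric] using Sc Sic by simp
  also have "\<dots> = 1\<^sub>m n" unfolding Si(1) using Sc Sic Si(1) by simp
  finally have "mat_inv n R = Si * Si"
    using mat_inv_eqI[of R n "Si * Si"] Sc Sic S(2) by auto
  then have "S * mat_inv n R * S = S * (Si * (Si * S))" using Sc Sic by simp
  also have "\<dots> = 1\<^sub>m n" unfolding Si(2) using Sc Sic Si(1) by simp
  finally show ?thesis unfolding S_def .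
qed

lemma mat_sqrt_congruence:
  assumes C: "C \<in> carrier_mat n n" and L: "L \<in> carrier_mat n n" and M: "M \<in> carrier_mat n n"
    and LM_psd: "psd_mat n (L * M)" and LKL: "L * (adj C * C) * L = 1\<^sub>m n" and LM: "L * M = M * L"
  shows "mat_sqrt n (C * (M * M) * adj C) = C * (L * M) * adj C"
proof -
  have "(C * (L * M) * adj C) * (C * (L * M) * adj C) = C * (L * M * (adj C * C) * (L * M)) * adj C"
    using C L M by simp
  also have "L * M * (adj C * C) * (L * M) = M * L * (adj C * C) * (L * M)"
    by (simp only: LM)
  also have "\<dots> = M * (L * (adj C * C) * L) * M"
    using C L M by simp
  finally have "(C * (L * M) * adj C) * (C * (L * M) * adj C) = C * (M * M) * adj C"
    unfolding LKL using M by simp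
  then show ?thesis using mat_sqrt_eqI[OF psd_congruence[OF LM_psd C]] by simp
qed

lemma mat_sqrt_sandwich:
  assumes R: "pd_mat n R" and A: "A \<in> carrier_mat n n" "adj A = A"
    and L: "L \<in> carrier_mat n n" and M: "M \<in> carrier_mat n n" and LM_psd: "psd_mat n (L * M)"
    and LKL: "L * (A * R * A) * L = 1\<^sub>m n" and LM: "L * M = M * L"
  shows "mat_sqrt n (mat_sqrt n R * (A * (M * M) * A) * mat_sqrt n R)
    = mat_sqrt n R * A * (L * M) * A * mat_sqrt n R"
proof -
  define S where "S = mat_sqrt n R"
  have S: "S \<in> carrier_mat n n" "adj S = S" "S * S = R"
    unfolding S_def using mat_sqrt_pd[OF R] by (auto simp: pd_mat_carrier pd_mat_adjoint)
  have adjC: "adj (S * A) = A * S" using mat_adjoint_mult[OF S(1) A(1)] S A by simp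
  have "adj (S * A) * (S * A) = A * (S * S) * A" unfolding adjC using S(1) A(1) by simp
  then have "L * (adj (S * A) * (S * A)) * L = 1\<^sub>m n" unfolding S(3) using LKL by simp
  then have "mat_sqrt n ((S * A) * (M * M) * adj (S * A)) = (S * A) * (L * M) * adj (S * A)"
    using mat_sqrt_congruence[OF _ L M LM_psd _ LM] S(1) A(1) by simp
  then show ?thesis unfolding S_def[symmetric] adjC using S(1) A(1) L M by simp
qed

lemma gen_fidelity_factored:
  assumes R: "pd_mat n R" and A: "A \<in> carrier_mat n n" "adj A = A"
    and L: "psd_mat n L" and X: "X \<in> carrier_mat n n" and LX_psd: "psd_mat n (L * X)"
    and LKL: "L * (A * R * A) * L = 1\<^sub>m n" and LX: "L * X = X * L"
  shows "gen_fidelity n R (A * A) (A * (X * X) * A) = mtrace (A * X * A)"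
proof -
  define S where "S = mat_sqrt n R"
  define Ri where "Ri = mat_inv n R"
  have S: "S \<in> carrier_mat n n" "S * S = R" and Ri: "Ri \<in> carrier_mat n n" "S * Ri * S = 1\<^sub>m n"
    unfolding S_def Ri_def using mat_sqrt_pd[OF R] mat_inv_pd(1)[OF R] mat_sqrt_inv_sqrt[OF R]
    by (auto simp: pd_mat_carrier)
  have Lc: "L \<in> carrier_mat n n" using L psd_mat_carrier by auto
  have "mat_sqrt n (S * (A * (1\<^sub>m n * 1\<^sub>m n) * A) * S) = S * A * (L * 1\<^sub>m n) * A * S"
    unfolding S_def using L Lc by (intro mat_sqrt_sandwich[OF R A Lc one_carrier_mat _ LKL], simp_all)
  then have sqrtP: "mat_sqrt n (S * (A * A) * S) = S * A * L * A * S" using S(1) A(1) Lc by simp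
  have sqrtQ: "mat_sqrt n (S * (A * (X * X) * A) * S) = S * A * (L * X) * A * S"
    unfolding S_def by (rule mat_sqrt_sandwich[OF R A Lc X LX_psd LKL LX])
  have "gen_fidelity n R (A * A) (A * (X * X) * A)
      = mtrace (S * A * L * A * S * Ri * (S * A * (L * X) * A * S))"
    unfolding gen_fidelity_def Let_def S_def[symmetric] Ri_def[symmetric] sqrtP sqrtQ ..
  also have "\<dots> = mtrace (S * (A * L * A * (S * Ri * S) * A * (L * X) * A * S))"
    using S(1) Ri(1) A(1) Lc X by simp
  also have "\<dots> = mtrace (A * L * A * A * (L * X) * A * (S * S))"
    unfolding Ri(2) using mtrace_mult_comm[OF S(1), of "A * L * A * A * (L * X) * A * S"] S(1) A(1) Lc X
    by simp
  also have "\<dots> = mtrace (A * (L * A * A * (L * X) * (A * R)))"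
    unfolding S(2) using A(1) Lc X R by (simp add: pd_mat_carrier)
  also have "\<dots> = mtrace (A * A * (L * X) * (A * R * A) * L)"
    using mtrace_mult_comm[OF A(1), of "L * A * A * (L * X) * (A * R)"]
      mtrace_mult_comm[OF Lc, of "A * A * (L * X) * (A * R * A)"] A(1) Lc X R
    by (simp add: pd_mat_carrier)
  also have "\<dots> = mtrace (A * A * (X * L) * (A * R * A) * L)"
    by (simp only: LX)
  also have "\<dots> = mtrace (A * (A * X) * (L * (A * R * A) * L))"
    using A(1) Lc X R by (simp add: pd_mat_carrier)
  also have "\<dots> = mtrace (A * X * A)"
    unfolding LKL using mtrace_mult_comm[OF A(1), of "A * X"] X A by simp
  finally show ?thesis .
qed

lemma mat_geo_mean_factorization:
  assumes P: "pd_mat n P" and Q: "pd_mat n Q"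
  obtains A X where "pd_mat n A" "pd_mat n X" "P = A * A" "Q = A * (X * X) * A"
    "mat_geo_mean n P Q = A * X * A"
proof
  define A where "A = mat_sqrt n P"
  define Ai where "Ai = mat_inv n A"
  define X where "X = mat_sqrt n (Ai * Q * Ai)"
  show "mat_geo_mean n P Q = A * X * A"
    unfolding mat_geo_mean_def Let_def A_def Ai_def X_def ..
  show A: "pd_mat n A" and "P = A * A" unfolding A_def using mat_sqrt_pd[OF P] by auto
  have Ai: "pd_mat n Ai" "A * Ai = 1\<^sub>m n" "Ai * A = 1\<^sub>m n" unfolding Ai_def using mat_inv_pd[OF A] by auto
  have Ac: "A \<in> carrier_mat n n" and Aic: "Ai \<in> carrier_mat n n" and Qc: "Q \<in> carrier_mat n n"
    using A Ai(1) Q pd_mat_carrier by auto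
  show "pd_mat n X" unfolding X_def by (rule mat_sqrt_pd(1)[OF pd_congruence_pd[OF Q Ai(1)]])
  have XX: "X * X = Ai * Q * Ai" unfolding X_def by (rule mat_sqrt_pd(2)[OF pd_congruence_pd[OF Q Ai(1)]])
  show "Q = A * (X * X) * A"
    unfolding XX using Ac Aic Qc
    by (simp add: mult_inverse_cancel[OF Ai(2) Ac Aic] Ai(3))
qed

lemma inverse_comb_congruence:
  fixes a b :: complex
  assumes A: "pd_mat n A" and X: "pd_mat n X"
  shows "A * (a \<cdot>\<^sub>m mat_inv n (A * A) + b \<cdot>\<^sub>m mat_inv n (A * (X * X) * A)) * A
    = a \<cdot>\<^sub>m 1\<^sub>m n + b \<cdot>\<^sub>m (mat_inv n X * mat_inv n X)"
proof -
  define Ai Xi where "Ai = mat_inv n A" and "Xi = mat_inv n X"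
  have Ai: "Ai \<in> carrier_mat n n" "A * Ai = 1\<^sub>m n" "Ai * A = 1\<^sub>m n"
    and Xi: "Xi \<in> carrier_mat n n" "X * Xi = 1\<^sub>m n" "Xi * X = 1\<^sub>m n"
    unfolding Ai_def Xi_def using mat_inv_pd[OF A] mat_inv_pd[OF X] pd_mat_carrier by auto
  have Ac: "A \<in> carrier_mat n n" and Xc: "X \<in> carrier_mat n n" using A X pd_mat_carrier by auto
  have "A * A * (Ai * Ai) = A * (A * Ai) * Ai" using Ac Ai(1) by simp
  also have "\<dots> = 1\<^sub>m n" using Ac Ai by simp
  finally have invP: "mat_inv n (A * A) = Ai * Ai"
    using Ac Ai(1) by (intro mat_inv_eqI) auto
  have "A * (X * X) * A * (Ai * (Xi * Xi) * Ai) = A * (X * (X * (A * Ai) * Xi) * Xi) * Ai"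
    using Ac Ai(1) Xc Xi(1) by simp
  also have "\<dots> = 1\<^sub>m n" using Ac Ai Xc Xi by simp
  finally have invQ: "mat_inv n (A * (X * X) * A) = Ai * (Xi * Xi) * Ai"
    using Ac Ai(1) Xc Xi(1) by (intro mat_inv_eqI) auto
  have "A * (a \<cdot>\<^sub>m mat_inv n (A * A) + b \<cdot>\<^sub>m mat_inv n (A * (X * X) * A)) * A
      = a \<cdot>\<^sub>m (A * Ai * (Ai * A)) + b \<cdot>\<^sub>m (A * Ai * (Xi * Xi) * (Ai * A))"
    unfolding invP invQ using Ac Ai(1) Xi(1) by (simp add: mult_smult_add_distrib)
  also have "\<dots> = a \<cdot>\<^sub>m 1\<^sub>m n + b \<cdot>\<^sub>m (Xi * Xi)"
    unfolding Ai(2,3) using Xi(1) by simp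
  finally show ?thesis unfolding Xi_def .
qed

lemma commute_inverse_comb:
  fixes a b :: complex
  assumes X: "pd_mat n X"
  shows "X * (a \<cdot>\<^sub>m 1\<^sub>m n + b \<cdot>\<^sub>m (mat_inv n X * mat_inv n X))
    = (a \<cdot>\<^sub>m 1\<^sub>m n + b \<cdot>\<^sub>m (mat_inv n X * mat_inv n X)) * X"
proof -
  have Xc: "X \<in> carrier_mat n n" and Xic: "mat_inv n X \<in> carrier_mat n n"
    using X mat_inv_pd(1)[OF X] pd_mat_carrier by auto
  have "X * (mat_inv n X * mat_inv n X) = mat_inv n X * mat_inv n X * X"
    using Xc Xic by (simp add: mult_inverse_cancel[OF mat_inv_pd(2)[OF X] Xc Xic] mat_inv_pd(3)[OF X])
  then show ?thesis using Xc Xic by (simp add: mult_smult_add_distrib)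
qed

theorem mainTheorem11:
  fixes d :: nat and P Q :: "complex mat" and t :: real
  assumes "pd_mat d P" and "pd_mat d Q"
    and "0 \<le> t" and "t \<le> 1"
  shows "gen_fidelity d
           ((1 - t) \<cdot>\<^sub>m mat_inv d P + t \<cdot>\<^sub>m mat_inv d Q) P Q
         = matsumoto_fidelity d P Q"
proof -
  obtain A X where A: "pd_mat d A" and X: "pd_mat d X" and P: "P = A * A"
    and Q: "Q = A * (X * X) * A" and geo: "mat_geo_mean d P Q = A * X * A"
    using mat_geo_mean_factorization[OF assms(1,2)] by blast
  let ?R = "complex_of_real (1 - t) \<cdot>\<^sub>m mat_inv d P + complex_of_real t \<cdot>\<^sub>m mat_inv d Q"
  let ?K = "complex_of_real (1 - t) \<cdot>\<^sub>m 1\<^sub>m d + complex_of_real t \<cdot>\<^sub>m (mat_inv d X * mat_inv d X)"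
  have R: "pd_mat d ?R"
    by (rule pd_convex_comb[OF mat_inv_pd(1)[OF assms(1)] mat_inv_pd(1)[OF assms(2)] assms(3,4)])
  have RK: "A * ?R * A = ?K" unfolding P Q by (rule inverse_comb_congruence[OF A X])
  have "pd_mat d ?K" using pd_congruence_pd[OF R A] unfolding RK .
  then obtain L where L: "pd_mat d L" "L * ?K * L = 1\<^sub>m d" "L * X = X * L"
    using pd_inverse_sqrt_commuting[OF _ pd_mat_carrier[OF X] commute_inverse_comb[OF X]] by blast
  have "psd_mat d (L * X)"
    by (rule psd_mult_commute[OF pd_imp_psd_mat[OF L(1)] pd_imp_psd_mat[OF X] L(3)])
  then have "gen_fidelity d ?R (A * A) (A * (X * X) * A) = mtrace (A * X * A)"
    using gen_fidelity_factored[OF R pd_mat_carrier[OF A] pd_mat_adjoint[OF A]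
        pd_imp_psd_mat[OF L(1)] pd_mat_carrier[OF X]] L(2,3) RK
    by simp
  then show ?thesis unfolding matsumoto_fidelity_def geo by (simp add: P[symmetric] Q[symmetric])
qed

end
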